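(* Let $t\ge1$. \begin{enumerate} \item If the minimal hyperbinary expansion of $n$ is $1^t2$, then $A(n)$ is the directed path graph \[1^t2\twoheadrightarrow 1^{t-1}20\twoheadrightarrow\cdots\twoheadrightarrow 20^t\to 10^{t+1}.\] \item If the minimal hyperbinary expansion of $n$ is $2^t$, then $A(n)$ is the directed path graph \[2^t\to 102^{t-1}\to 1102^{t-2}\to\cdots\to 1^t0.\] \end{enumerate} Here each arrow is an arc with the indicated label, and there are no other vertices or arcs.
   Context: A hyperbinary expansion of a nonnegative integer $n$ is a word $x_0\cdots x_k$ over $\{0,1,2\}$ with $x_0\ne0$ and $\sum_i x_i2^{k-i}=n$. $\mathcal H(n)$ is the set of such expansions. $A(n)$ is the directed graph on $\mathcal H(n)$ with the following labeled arcs, for arbitrary words $\mathbf x,\mathbf y$ over $\{0,1,2\}$ whenever both endpoints lie in $\mathcal H(n)$: \begin{itemize} \item an arc labeled $\to$ from $\mathbf x02\mathbf y$ to $\mathbf x10\mathbf y$ and from $2\mathbf y$ to $10\mathbf y$; \item an arc labeled $\twoheadrightarrow$ from $\mathbf x12\mathbf y$ to $\mathbf x20\mathbf y$. \end{itemize} The minimal hyperbinary expansion of $n$ is its unique hyperbinary expansion containing no digit $0$. Exponents denote repetition of a letter, e.g. $1^t=1\cdots1$ ($t$ times). *)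

theory Defs
  imports Main
begin

text \<open>Words over {0,1,2} are lists of natural-number digits, most significant digit first.\<close>

definition word_val :: "nat list \<Rightarrow> nat" where
  "word_val xs = (\<Sum>i<length xs. xs ! i * 2 ^ (length xs - 1 - i))"

definition hyperbinary :: "nat \<Rightarrow> nat list set" where
  "hyperbinary n = {xs. xs \<noteq> [] \<and> set xs \<subseteq> {0,1,2} \<and> hd xs \<noteq> 0 \<and> word_val xs = n}"

definition minimal_hyperbinary :: "nat \<Rightarrow> nat list \<Rightarrow> bool" where
  "minimal_hyperbinary n w \<longleftrightarrow> w \<in> hyperbinary n \<and> 0 \<notin> set w"

datatype arc_label = Single | Double  (* Single: \<rightarrow>,  Double: \<twoheadrightarrow> *)

definition arcs :: "nat \<Rightarrow> (nat list \<times> arc_label \<times> nat list) set" where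
  "arcs n =
     {(u, Single, v) | u v. u \<in> hyperbinary n \<and> v \<in> hyperbinary n \<and>
        ((\<exists>x y. u = x @ [0,2] @ y \<and> v = x @ [1,0] @ y) \<or> (\<exists>y. u = 2 # y \<and> v = [1,0] @ y))}
   \<union> {(u, Double, v) | u v. u \<in> hyperbinary n \<and> v \<in> hyperbinary n \<and>
        (\<exists>x y. u = x @ [1,2] @ y \<and> v = x @ [2,0] @ y)}"

end

theory Submission
  imports Defs
begin

text \<open>
  Splitting off the last digit gives the recursion H(2m+1) = H(m)1 and
  H(2m+2) = H(m+1)0 \<union> H(m)2 (plus the one-digit words) for the sets of hyperbinary
  expansions. Hence 2^k - 1 has the single expansion 1^k, and induction on t yields the
  vertex sets of both paths, the numbers with minimal expansions 1^t2 and 2^t being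
  2^(t+1) and 2^(t+1) - 2. Every vertex is a word c^a d e^b, in which a factor of two
  different digits can only sit at a block boundary; this locates every occurrence of
  02, 12 and of a leading 2, and so determines all arcs.
\<close>

lemma word_val_Nil [simp]: "word_val [] = 0"
  by (simp add: word_val_def)

lemma word_val_snoc [simp]: "word_val (xs @ [d]) = 2 * word_val xs + d"
proof -
  let ?n = "length xs"
  have "word_val (xs @ [d]) = (\<Sum>i<Suc ?n. (xs @ [d]) ! i * 2 ^ (?n - i))"
    by (simp add: word_val_def)
  also have "\<dots> = (\<Sum>i<?n. xs ! i * 2 ^ (?n - i)) + d"
    by (simp add: nth_append)
  also have "(\<Sum>i<?n. xs ! i * 2 ^ (?n - i)) = 2 * (\<Sum>i<?n. xs ! i * 2 ^ (?n - 1 - i))"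
    unfolding sum_distrib_left
  proof (rule sum.cong)
    fix i assume "i \<in> {..<?n}"
    then have "?n - i = Suc (?n - 1 - i)" by auto
    then show "xs ! i * 2 ^ (?n - i) = 2 * (xs ! i * 2 ^ (?n - 1 - i))" by simp
  qed simp
  finally show ?thesis by (simp add: word_val_def)
qed

lemma word_val_singleton [simp]: "word_val [d] = d"
  using word_val_snoc[of "[]" d] by simp

lemma word_val_replicate: "word_val (replicate t d) + d = d * 2 ^ t"
  by (induction t) (simp_all flip: replicate_append_same)

lemma word_val_eq_0D: "word_val xs = 0 \<Longrightarrow> set xs \<subseteq> {0}"
  by (induction xs rule: rev_induct) simp_all

lemma hyperbinary_0: "hyperbinary 0 = {}"
proof -
  have False if "w \<in> hyperbinary 0" for w
  proof -
    from that have "set w \<subseteq> {0}" "hd w \<in> set w" "hd w \<noteq> 0"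
      using word_val_eq_0D[of w] by (auto simp: hyperbinary_def)
    then show False by auto
  qed
  then show ?thesis by blast
qed

lemma hyperbinary_snoc_decomp:
  "hyperbinary m =
     {[d] | d. d \<in> {1,2} \<and> m = d} \<union>
     {xs @ [d] | xs d k. xs \<in> hyperbinary k \<and> d \<in> {0,1,2} \<and> m = 2 * k + d}"
proof (intro set_eqI iffI)
  fix w assume w: "w \<in> hyperbinary m"
  then have "w \<noteq> []" by (simp add: hyperbinary_def)
  then obtain xs d where wd: "w = xs @ [d]" by (cases w rule: rev_cases) auto
  show "w \<in> {[d] | d. d \<in> {1,2} \<and> m = d} \<union>
     {xs @ [d] | xs d k. xs \<in> hyperbinary k \<and> d \<in> {0,1,2} \<and> m = 2 * k + d}"
  proof (cases "xs = []")
    case True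
    then show ?thesis using w wd by (auto simp: hyperbinary_def)
  next
    case False
    then have "xs \<in> hyperbinary (word_val xs)" "d \<in> {0,1,2}" "m = 2 * word_val xs + d"
      using w wd by (simp_all add: hyperbinary_def hd_append)
    then show ?thesis using wd by blast
  qed
next
  fix w assume "w \<in> {[d] | d. d \<in> {1,2} \<and> m = d} \<union>
     {xs @ [d] | xs d k. xs \<in> hyperbinary k \<and> d \<in> {0,1,2} \<and> m = 2 * k + d}"
  then show "w \<in> hyperbinary m"
    by (auto simp: hyperbinary_def)
qed

lemma hyperbinary_odd:
  "hyperbinary (2 * m + 1) = (\<lambda>xs. xs @ [1]) ` hyperbinary m \<union> (if m = 0 then {[1]} else {})"
proof (intro set_eqI iffI)
  fix w assume "w \<in> hyperbinary (2 * m + 1)"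
  then consider "w = [2 * m + 1]" "m = 0"
    | xs d k where "w = xs @ [d]" "xs \<in> hyperbinary k" "d \<in> {0,1,2}" "2 * m + 1 = 2 * k + d"
    by (subst (asm) hyperbinary_snoc_decomp) auto
  then show "w \<in> (\<lambda>xs. xs @ [1]) ` hyperbinary m \<union> (if m = 0 then {[1]} else {})"
  proof cases
    case 2
    then have "k = m" "d = 1" by (simp_all only: insert_iff empty_iff) presburger+
    with 2 show ?thesis by simp
  qed simp
qed (subst hyperbinary_snoc_decomp, auto split: if_splits)

lemma hyperbinary_even:
  "hyperbinary (2 * m + 2) =
     (\<lambda>xs. xs @ [0]) ` hyperbinary (m + 1) \<union> (\<lambda>xs. xs @ [2]) ` hyperbinary m \<union>
     (if m = 0 then {[2]} else {})"
proof (intro set_eqI iffI)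
  fix w assume "w \<in> hyperbinary (2 * m + 2)"
  then consider "w = [2 * m + 2]" "m = 0"
    | xs d k where "w = xs @ [d]" "xs \<in> hyperbinary k" "d \<in> {0,1,2}" "2 * m + 2 = 2 * k + d"
    by (subst (asm) hyperbinary_snoc_decomp) auto
  then show "w \<in> (\<lambda>xs. xs @ [0]) ` hyperbinary (m + 1) \<union> (\<lambda>xs. xs @ [2]) ` hyperbinary m \<union>
     (if m = 0 then {[2]} else {})"
  proof cases
    case 2
    then have "k = m + 1 \<and> d = 0 \<or> k = m \<and> d = 2" by (simp only: insert_iff empty_iff) presburger
    with 2 show ?thesis by auto
  qed simp
qed (subst hyperbinary_snoc_decomp, auto split: if_splits; force)

lemma hyperbinary_1: "hyperbinary 1 = {[1]}"
proof -
  have "hyperbinary 1 = hyperbinary (2 * 0 + 1)" by (simp only: mult_zero_right add_0)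
  then show ?thesis unfolding hyperbinary_odd hyperbinary_0 by simp
qed

lemma hyperbinary_2: "hyperbinary 2 = {[1,0], [2]}"
proof -
  have "hyperbinary 2 = hyperbinary (2 * 0 + 2)" by (simp only: mult_zero_right add_0)
  then show ?thesis unfolding hyperbinary_even hyperbinary_0 add_0 hyperbinary_1 by auto
qed

lemma hyperbinary_mersenne: "hyperbinary (2 ^ Suc k - 1) = {replicate (Suc k) 1}"
proof (induction k)
  case (Suc k)
  have m: "(2::nat) ^ Suc (Suc k) - 1 = 2 * (2 ^ Suc k - 1) + 1" "(2::nat) ^ Suc k - 1 \<noteq> 0"
    using one_less_power[of "2::nat" "Suc k"] by simp_all
  show ?case
    unfolding m(1) hyperbinary_odd Suc.IH using m(2) by (simp add: replicate_append_same)
qed (use hyperbinary_1 in simp)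

definition path_ones_two :: "nat \<Rightarrow> nat \<Rightarrow> nat list" where
  "path_ones_two t i =
     (if i \<le> t then replicate (t - i) 1 @ [2] @ replicate i 0 else 1 # replicate (t + 1) 0)"

definition path_twos :: "nat \<Rightarrow> nat \<Rightarrow> nat list" where
  "path_twos t i =
     (if i = 0 then replicate t 2 else replicate (i - 1) 1 @ [1, 0] @ replicate (t - i) 2)"

lemma path_ones_two_Suc_Suc:
  "i \<le> Suc t \<Longrightarrow> path_ones_two (Suc t) (Suc i) = path_ones_two t i @ [0]"
  by (auto simp: path_ones_two_def Suc_diff_le replicate_append_same)

lemma hyperbinary_two_pow: "hyperbinary (2 ^ Suc t) = path_ones_two t ` {0..Suc t}"
proof (induction t)
  case 0
  have "{0..Suc 0} = {0, 1::nat}" by auto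
  then show ?case by (simp add: hyperbinary_2 path_ones_two_def insert_commute)
next
  case (Suc t)
  let ?m = "2 ^ Suc t - 1 :: nat"
  have m: "2 ^ Suc (Suc t) = 2 * ?m + 2" "?m + 1 = 2 ^ Suc t" "?m \<noteq> 0"
    using one_less_power[of "2::nat" "Suc t"] by simp_all
  have "{0..Suc (Suc t)} = insert 0 (Suc ` {0..Suc t})"
    by (auto simp: image_iff)
  moreover have
    "path_ones_two (Suc t) ` Suc ` {0..Suc t} = (\<lambda>xs. xs @ [0]) ` path_ones_two t ` {0..Suc t}"
    unfolding image_image by (rule image_cong) (simp_all add: path_ones_two_Suc_Suc)
  moreover have "path_ones_two (Suc t) 0 = replicate (Suc t) 1 @ [2]"
    by (simp add: path_ones_two_def)
  ultimately have "path_ones_two (Suc t) ` {0..Suc (Suc t)} =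
      insert (replicate (Suc t) 1 @ [2]) ((\<lambda>xs. xs @ [0]) ` path_ones_two t ` {0..Suc t})"
    by (simp only: image_insert)
  then show ?case
    unfolding m(1) hyperbinary_even m(2) Suc.IH hyperbinary_mersenne using m(3) by auto
qed

lemma path_twos_Suc: "i \<le> t \<Longrightarrow> path_twos (Suc t) i = path_twos t i @ [2]"
  by (auto simp: path_twos_def Suc_diff_le replicate_append_same)

lemma hyperbinary_two_pow_minus_two:
  assumes "t \<ge> 1" shows "hyperbinary (2 ^ Suc t - 2) = path_twos t ` {0..t}"
  using assms
proof (induction t rule: dec_induct)
  case base
  have "{0..Suc 0} = {0, 1::nat}" by auto
  then show ?case by (simp add: hyperbinary_2 path_twos_def)
next
  case (step t)
  let ?m = "2 ^ Suc t - 2 :: nat"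
  have m: "2 ^ Suc (Suc t) - 2 = 2 * ?m + 2" "?m + 1 = 2 ^ Suc t - 1" "?m \<noteq> 0"
    using step(1) one_less_power[of "2::nat" t] by simp_all
  have "path_twos (Suc t) ` {0..t} = (\<lambda>xs. xs @ [2]) ` path_twos t ` {0..t}"
    unfolding image_image by (rule image_cong) (simp_all add: path_twos_Suc)
  moreover have "path_twos (Suc t) (Suc t) = replicate (Suc t) 1 @ [0]"
    by (simp add: path_twos_def replicate_append_same)
  ultimately have "path_twos (Suc t) ` {0..Suc t} =
      insert (replicate (Suc t) 1 @ [0]) ((\<lambda>xs. xs @ [2]) ` path_twos t ` {0..t})"
    by (simp add: atLeast0_atMost_Suc)
  then show ?case
    unfolding m(1) hyperbinary_even m(2) step.IH hyperbinary_mersenne using m(3) by auto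
qed

definition single_move :: "nat list \<Rightarrow> nat list \<Rightarrow> bool" where
  "single_move u v \<longleftrightarrow>
     (\<exists>x y. u = x @ [0,2] @ y \<and> v = x @ [1,0] @ y) \<or> (\<exists>y. u = 2 # y \<and> v = [1,0] @ y)"

definition double_move :: "nat list \<Rightarrow> nat list \<Rightarrow> bool" where
  "double_move u v \<longleftrightarrow> (\<exists>x y. u = x @ [1,2] @ y \<and> v = x @ [2,0] @ y)"

lemma arcs_eq:
  "arcs n =
     {(u, Single, v) | u v. u \<in> hyperbinary n \<and> v \<in> hyperbinary n \<and> single_move u v} \<union>
     {(u, Double, v) | u v. u \<in> hyperbinary n \<and> v \<in> hyperbinary n \<and> double_move u v}"
  unfolding arcs_def single_move_def double_move_def ..

lemma nth_block_word:
  "j < a + Suc b \<Longrightarrow>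
     (replicate a c @ d # replicate b e) ! j = (if j < a then c else if j = a then d else e)"
  by (auto simp: nth_append nth_Cons')

lemma block_word_pair_factor:
  assumes u: "replicate a c @ d # replicate b e = x @ [p, q] @ y" and "p \<noteq> q"
  shows "p = c \<and> q = d \<and> (\<exists>k. a = Suc k \<and> x = replicate k c \<and> y = replicate b e) \<or>
         p = d \<and> q = e \<and> (\<exists>k. b = Suc k \<and> x = replicate a c \<and> y = replicate k e)"
proof -
  let ?u = "replicate a c @ d # replicate b e" and ?j = "length x"
  have len: "Suc ?j < a + Suc b" using arg_cong[OF u, of length] by simp
  have p: "p = (if ?j < a then c else if ?j = a then d else e)"
    using nth_block_word[of ?j a b c d e] len by (simp add: u nth_append)
  have q: "q = (if Suc ?j < a then c else if Suc ?j = a then d else e)"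
    using nth_block_word[of "Suc ?j" a b c d e] len by (simp add: u nth_append)
  have x: "x = take ?j ?u" and y: "y = drop (Suc (Suc ?j)) ?u" by (simp_all add: u)
  consider "Suc ?j = a" | "?j = a" | "Suc ?j < a \<or> a < ?j" by linarith
  then show ?thesis
  proof cases
    case 1
    then show ?thesis using p q x y by auto
  next
    case 2
    then show ?thesis using p q x y len by (auto intro!: exI[of _ "b - 1"])
  qed (use p q \<open>p \<noteq> q\<close> in auto)
qed

lemma path_ones_two_block:
  "i \<le> t \<Longrightarrow> path_ones_two t i = replicate (t - i) 1 @ 2 # replicate i 0"
  by (simp add: path_ones_two_def)

lemma path_ones_two_last: "path_ones_two t (Suc t) = replicate 1 1 @ 0 # replicate t 0"
  by (simp add: path_ones_two_def)

lemma path_twos_block: "0 < i \<Longrightarrow> path_twos t i = replicate i 1 @ 0 # replicate (t - i) 2"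
  by (cases i) (simp_all add: path_twos_def replicate_append_same)

lemma double_move_path_ones_two:
  assumes "i \<le> Suc t"
  shows "double_move (path_ones_two t i) v \<longleftrightarrow> i < t \<and> v = path_ones_two t (Suc i)"
proof
  assume "double_move (path_ones_two t i) v"
  then obtain x y where u: "path_ones_two t i = x @ [1,2] @ y" and v: "v = x @ [2,0] @ y"
    unfolding double_move_def by blast
  consider "i \<le> t" | "i = Suc t" using assms by linarith
  then show "i < t \<and> v = path_ones_two t (Suc i)"
  proof cases
    case 1
    with u have "replicate (t - i) 1 @ 2 # replicate i 0 = x @ [1,2] @ y"
      by (simp add: path_ones_two_block)
    from block_word_pair_factor[OF this]
    obtain k where k: "t - i = Suc k" and "x = replicate k 1" "y = replicate i 0" by auto
    moreover from k have "i < t" "t - Suc i = k" by arith+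
    ultimately show ?thesis using v by (simp add: path_ones_two_def)
  next
    case 2
    with u have "replicate 1 1 @ 0 # replicate t 0 = x @ [1,2] @ y"
      by (simp add: path_ones_two_last)
    from block_word_pair_factor[OF this] show ?thesis by simp
  qed
next
  assume i: "i < t \<and> v = path_ones_two t (Suc i)"
  then have "t - i = Suc (t - Suc i)" by arith
  with i have "path_ones_two t i = replicate (t - Suc i) 1 @ [1,2] @ replicate i 0"
    "v = replicate (t - Suc i) 1 @ [2,0] @ replicate i 0"
    by (simp_all add: path_ones_two_def replicate_app_Cons_same)
  then show "double_move (path_ones_two t i) v"
    unfolding double_move_def by blast
qed

lemma single_move_path_ones_two:
  assumes "i \<le> Suc t"
  shows "single_move (path_ones_two t i) v \<longleftrightarrow> i = t \<and> v = path_ones_two t (Suc t)"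
proof
  assume "single_move (path_ones_two t i) v"
  then consider x y where "path_ones_two t i = x @ [0,2] @ y"
    | y where "path_ones_two t i = 2 # y" "v = [1,0] @ y"
    unfolding single_move_def by blast
  then show "i = t \<and> v = path_ones_two t (Suc t)"
  proof cases
    case (1 x y)
    note u = this
    consider "i \<le> t" | "i = Suc t" using assms by linarith
    then show ?thesis
    proof cases
      case 1
      with u have "replicate (t - i) 1 @ 2 # replicate i 0 = x @ [0,2] @ y"
        by (simp add: path_ones_two_block)
      from block_word_pair_factor[OF this] show ?thesis by simp
    next
      case 2
      with u have "replicate 1 1 @ 0 # replicate t 0 = x @ [0,2] @ y"
        by (simp add: path_ones_two_last)
      from block_word_pair_factor[OF this] show ?thesis by simp
    qed
  next
    case (2 y)
    then have "i \<le> t" by (auto simp: path_ones_two_def split: if_splits)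
    with 2 have "replicate (t - i) 1 @ 2 # replicate i 0 = 2 # y"
      by (simp add: path_ones_two_block)
    then have "t - i = 0" "y = replicate i 0" by (cases "t - i"; simp)+
    then show ?thesis using 2 \<open>i \<le> t\<close> by (simp add: path_ones_two_def)
  qed
next
  assume "i = t \<and> v = path_ones_two t (Suc t)"
  then show "single_move (path_ones_two t i) v"
    by (simp add: single_move_def path_ones_two_def)
qed

lemma single_move_path_twos:
  assumes "i \<le> t"
  shows "single_move (path_twos t i) v \<longleftrightarrow> i < t \<and> v = path_twos t (Suc i)"
proof
  assume "single_move (path_twos t i) v"
  then consider x y where "path_twos t i = x @ [0,2] @ y" "v = x @ [1,0] @ y"
    | y where "path_twos t i = 2 # y" "v = [1,0] @ y"
    unfolding single_move_def by blast
  then show "i < t \<and> v = path_twos t (Suc i)"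
  proof cases
    case (1 x y)
    have "0 \<in> set (path_twos t i)" using 1(1) by simp
    then have "0 < i" by (auto simp: path_twos_def split: if_splits)
    with 1 have "replicate i 1 @ 0 # replicate (t - i) 2 = x @ [0,2] @ y"
      by (simp add: path_twos_block)
    from block_word_pair_factor[OF this]
    obtain k where k: "t - i = Suc k" and "x = replicate i 1" "y = replicate k 2" by auto
    moreover from k have "i < t" "t - Suc i = k" by arith+
    ultimately show ?thesis
      using 1(2) by (simp add: path_twos_block replicate_app_Cons_same)
  next
    case (2 y)
    have "i = 0"
    proof (rule ccontr)
      assume "i \<noteq> 0"
      with 2(1) have "replicate i 1 @ 0 # replicate (t - i) 2 = 2 # y"
        by (simp add: path_twos_block)
      with \<open>i \<noteq> 0\<close> show False by (cases i) simp_all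
    qed
    with 2(1) have "replicate t 2 = 2 # y" by (simp add: path_twos_def)
    then obtain k where "t = Suc k" "y = replicate k 2" by (cases t) auto
    then show ?thesis using 2(2) \<open>i = 0\<close> by (simp add: path_twos_def)
  qed
next
  assume i: "i < t \<and> v = path_twos t (Suc i)"
  show "single_move (path_twos t i) v"
  proof (cases "i = 0")
    case True
    from i obtain k where "t = Suc k" using less_imp_Suc_add by blast
    with i True have "path_twos t i = 2 # replicate k 2" "v = [1,0] @ replicate k 2"
      by (simp_all add: path_twos_def)
    then show ?thesis unfolding single_move_def by blast
  next
    case False
    from i have "t - i = Suc (t - Suc i)" by arith
    with i False have "path_twos t i = replicate i 1 @ [0,2] @ replicate (t - Suc i) 2"
      "v = replicate i 1 @ [1,0] @ replicate (t - Suc i) 2"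
      by (simp_all add: path_twos_block replicate_app_Cons_same)
    then show ?thesis unfolding single_move_def by blast
  qed
qed

lemma not_double_move_path_twos: "\<not> double_move (path_twos t i) v"
proof
  assume "double_move (path_twos t i) v"
  then obtain x y where u: "path_twos t i = x @ [1,2] @ y"
    unfolding double_move_def by blast
  then have "1 \<in> set (path_twos t i)" by simp
  then have "0 < i" by (auto simp: path_twos_def split: if_splits)
  with u have "replicate i 1 @ 0 # replicate (t - i) 2 = x @ [1,2] @ y"
    by (simp add: path_twos_block)
  from block_word_pair_factor[OF this] show False by simp
qed

lemma inj_on_path_ones_two: "inj_on (path_ones_two t) {0..Suc t}"
proof (rule inj_on_inverseI)
  show "length (filter ((=) 0) (path_ones_two t i)) = i" if "i \<in> {0..Suc t}" for i
    using that by (auto simp: path_ones_two_def filter_replicate)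
qed

lemma inj_on_path_twos: "inj_on (path_twos t) {0..t}"
proof (rule inj_on_inverseI)
  show "length (filter ((=) 1) (path_twos t i)) = i" if "i \<in> {0..t}" for i
    using that by (cases "i = 0") (auto simp: path_twos_def filter_replicate)
qed

lemma arcs_two_pow:
  "arcs (2 ^ Suc t) =
     {(path_ones_two t i, Double, path_ones_two t (i + 1)) | i. i < t} \<union>
     {(path_ones_two t t, Single, path_ones_two t (t + 1))}"
  unfolding arcs_eq hyperbinary_two_pow
  by (auto simp: single_move_path_ones_two double_move_path_ones_two)

lemma arcs_two_pow_minus_two:
  assumes "t \<ge> 1"
  shows "arcs (2 ^ Suc t - 2) = {(path_twos t i, Single, path_twos t (i + 1)) | i. i < t}"
  unfolding arcs_eq hyperbinary_two_pow_minus_two[OF assms]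
  by (auto simp: single_move_path_twos not_double_move_path_twos)

lemma minimal_hyperbinary_ones_two:
  "minimal_hyperbinary n (replicate t 1 @ [2]) \<Longrightarrow> n = 2 ^ Suc t"
  using word_val_replicate[of t 1] by (simp add: minimal_hyperbinary_def hyperbinary_def)

lemma minimal_hyperbinary_twos:
  "minimal_hyperbinary n (replicate t 2) \<Longrightarrow> n = 2 ^ Suc t - 2"
  using word_val_replicate[of t 2] by (simp add: minimal_hyperbinary_def hyperbinary_def)

theorem mainTheorem7:
  fixes t n :: nat
  assumes "t \<ge> 1"
  shows
    "(minimal_hyperbinary n (replicate t 1 @ [2]) \<longrightarrow>
       (let p = (\<lambda>i. if i \<le> t then replicate (t - i) 1 @ [2] @ replicate i 0
                      else 1 # replicate (t + 1) 0)
        in hyperbinary n = p ` {0..t+1} \<and> inj_on p {0..t+1} \<and>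
           arcs n = {(p i, Double, p (i+1)) | i. i < t} \<union> {(p t, Single, p (t+1))}))
   \<and>
    (minimal_hyperbinary n (replicate t 2) \<longrightarrow>
       (let q = (\<lambda>i. if i = 0 then replicate t 2
                      else replicate (i - 1) 1 @ [1, 0] @ replicate (t - i) 2)
        in hyperbinary n = q ` {0..t} \<and> inj_on q {0..t} \<and>
           arcs n = {(q i, Single, q (i+1)) | i. i < t}))"
proof -
  have p: "(\<lambda>i. if i \<le> t then replicate (t - i) 1 @ [2] @ replicate i 0
                 else 1 # replicate (t + 1) 0) = path_ones_two t"
    by (simp add: fun_eq_iff path_ones_two_def)
  have q: "(\<lambda>i. if i = 0 then replicate t 2
                 else replicate (i - 1) 1 @ [1, 0] @ replicate (t - i) 2) = path_twos t"
    by (simp add: fun_eq_iff path_twos_def)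
  show ?thesis
    unfolding Let_def p q
    by (intro conjI impI; (drule minimal_hyperbinary_ones_two | drule minimal_hyperbinary_twos))
      (simp_all add: hyperbinary_two_pow inj_on_path_ones_two arcs_two_pow
        hyperbinary_two_pow_minus_two[OF assms] inj_on_path_twos arcs_two_pow_minus_two[OF assms]
        del: power_Suc)
qed

end
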